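(* Let $\mathcal X=\{\vec x^{(1)},\dots,\vec x^{(M)}\}\subset\mathbb{R}^d$, and let $\vec u\subseteq[d]$. For each $\vec v\subseteq\vec u$ let $\mathcal I_{\vec v}$ be a finite family of frequency vectors $\vec\omega\in\mathbb{R}^d$ with $\vec\omega_{\vec v^c}=\vec 0$ (with $\mathcal I_\varnothing=\{\vec 0\}$), let $\vec A_{\vec v}=\left(\mathrm{e}^{\mathrm{i}\langle\vec\omega_{\vec v},\vec x_{\vec v}\rangle}\right)_{\vec x\in\mathcal X,\vec\omega\in\mathcal I_{\vec v}}\in\mathbb{C}^{M\times|\mathcal I_{\vec v}|}$, let $\vec a_{\vec v}\in\mathbb{C}^{|\mathcal I_{\vec v}|}$, and let $f_{\vec v}$ denote the function on $\mathcal X$ given by the vector $\vec A_{\vec v}\vec a_{\vec v}$, i.e. $f_{\vec v}(\vec x_{\vec v})=\sum_{\vec\omega\in\mathcal I_{\vec v}}(\vec a_{\vec v})_{\vec\omega}\mathrm{e}^{\mathrm{i}\langle\vec\omega_{\vec v},\vec x_{\vec v}\rangle}$. Define $$\hat{\vec W}_{\vec u}=\frac{1}{M^2}\vec A_{\vec u}^*\Big(\sum_{\vec v\subsetneq\vec u}\vec A_{\vec v}\vec A_{\vec v}^*\Big)\vec A_{\vec u}.$$ Then $$\vec a_{\vec u}^*\hat{\vec W}_{\vec u}\vec a_{\vec u}\ge\sum_{\vec v\subsetneq\vec u,\ \vec a_{\vec v}\neq\vec 0}\frac{1}{\|\vec a_{\vec v}\|_2^2}\,\big|\langle f_{\vec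 u},f_{\vec v}\rangle_{\mathcal X}\big|^2,$$ where $\langle g,h\rangle_{\mathcal X}=\frac1M\sum_{\vec x\in\mathcal X}g(\vec x)\overline{h(\vec x)}$.
   Context: $[d]=\{1,\dots,d\}$, $\vec x_{\vec v}=(x_i)_{i\in\vec v}$, $\vec v^c=[d]\setminus\vec v$; the sum over $\vec v\subsetneq\vec u$ includes $\vec v=\varnothing$. $\vec A^*$ denotes the conjugate transpose. *)

theory Defs
  imports "HOL-Analysis.Analysis" "HOL-Library.Complex_Order"
begin

text \<open>Coordinates of R^d are indexed by the finite type 'd (so [d] = UNIV, subsets u of [d]
are sets of type 'd set).  Frequency families are I :: 'd set => (real^'d) set,
coefficient vectors are a v :: real^'d => complex (indexed by the frequencies in I v).\<close>

definition sub_inner :: "'d::finite set \<Rightarrow> real^'d \<Rightarrow> real^'d \<Rightarrow> real" where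
  "sub_inner v w x = (\<Sum>j\<in>v. w $ j * x $ j)"

text \<open>Entry (x, omega) of the matrix A_v: exp(i <omega_v, x_v>).\<close>
definition Aent :: "'d::finite set \<Rightarrow> real^'d \<Rightarrow> real^'d \<Rightarrow> complex" where
  "Aent v x w = exp (\<i> * complex_of_real (sub_inner v w x))"

definition fv :: "('d::finite set \<Rightarrow> (real^'d) set) \<Rightarrow> ('d set \<Rightarrow> real^'d \<Rightarrow> complex)
    \<Rightarrow> 'd set \<Rightarrow> real^'d \<Rightarrow> complex" where
  "fv I a v x = (\<Sum>w\<in>I v. a v w * Aent v x w)"

definition inner_X :: "(real^'d::finite) set \<Rightarrow> (real^'d \<Rightarrow> complex) \<Rightarrow> (real^'d \<Rightarrow> complex) \<Rightarrow> complex" where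
  "inner_X X g h = (\<Sum>x\<in>X. g x * cnj (h x)) / of_nat (card X)"

text \<open>Entry (w, w') of What_u = 1/M^2 A_u^* (sum_{v proper subset u} A_v A_v^* ) A_u.\<close>
definition What :: "(real^'d::finite) set \<Rightarrow> ('d set \<Rightarrow> (real^'d) set) \<Rightarrow> 'd set
    \<Rightarrow> real^'d \<Rightarrow> real^'d \<Rightarrow> complex" where
  "What X I u w w' = (1 / (of_nat (card X))^2) *
     (\<Sum>x\<in>X. \<Sum>y\<in>X. cnj (Aent u x w) *
        (\<Sum>v\<in>{v. v \<subset> u}. \<Sum>\<eta>\<in>I v. Aent v x \<eta> * cnj (Aent v y \<eta>)) * Aent u y w')"

definition quad_form :: "'i set \<Rightarrow> ('i \<Rightarrow> 'i \<Rightarrow> complex) \<Rightarrow> ('i \<Rightarrow> complex) \<Rightarrow> complex" where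
  "quad_form S W a = (\<Sum>w\<in>S. \<Sum>w'\<in>S. cnj (a w) * W w w' * a w')"

definition norm2_sq :: "'i set \<Rightarrow> ('i \<Rightarrow> complex) \<Rightarrow> real" where
  "norm2_sq S a = (\<Sum>w\<in>S. (cmod (a w))^2)"

end

(* Let c_v = M^-1 A_v^* f_u be the vector of empirical inner products of f_u = A_u a_u with the
   exponentials of frequency in I_v.  As W_u is a sum of Gram matrices,
   a_u^* W_u a_u = sum_{v proper subset of u} |c_v|^2, while <f_u, f_v>_X = a_v^* c_v.  So by
   Cauchy-Schwarz each summand of the right-hand side is at most |c_v|^2, and the terms with
   a_v = 0 only add nonnegative terms on the left. *)

theory Submission
  imports Defs
begin

lemma cmod_sum_cnj_mult_power2_le:
  fixes p q :: "'i \<Rightarrow> complex"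
  shows "(cmod (\<Sum>i\<in>S. cnj (p i) * q i))^2 \<le> (\<Sum>i\<in>S. (cmod (p i))^2) * (\<Sum>i\<in>S. (cmod (q i))^2)"
proof -
  have "cmod (\<Sum>i\<in>S. cnj (p i) * q i) \<le> (\<Sum>i\<in>S. cmod (p i) * cmod (q i))"
    by (rule order_trans[OF norm_sum]) (simp add: norm_mult)
  then have "(cmod (\<Sum>i\<in>S. cnj (p i) * q i))^2 \<le> (\<Sum>i\<in>S. cmod (p i) * cmod (q i))^2"
    by (simp add: power_mono)
  also have "\<dots> \<le> (\<Sum>i\<in>S. (cmod (p i))^2) * (\<Sum>i\<in>S. (cmod (q i))^2)"
    by (rule Cauchy_Schwarz_ineq_sum)
  finally show ?thesis .
qed

lemma cmod_sum_cnj_mult_power2_div_norm2_sq_le: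
  "(cmod (\<Sum>i\<in>S. cnj (a i) * c i))^2 / norm2_sq S a \<le> (\<Sum>i\<in>S. (cmod (c i))^2)"
proof (cases "norm2_sq S a = 0")
  case True
  then show ?thesis by (simp add: sum_nonneg)
next
  case False
  then have "norm2_sq S a > 0"
    unfolding norm2_sq_def by (simp add: sum_nonneg order_le_neq_trans)
  with cmod_sum_cnj_mult_power2_le[of a c S] show ?thesis
    by (simp add: norm2_sq_def divide_le_eq mult.commute)
qed

lemma quad_form_scale:
  "quad_form S (\<lambda>w w'. c * W w w') a = c * quad_form S W a"
  unfolding quad_form_def by (simp add: sum_distrib_left mult_ac)

lemma quad_form_sum_kernel:
  "quad_form S (\<lambda>w w'. \<Sum>i\<in>V. W i w w') a = (\<Sum>i\<in>V. quad_form S (W i) a)"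
proof -
  have "quad_form S (\<lambda>w w'. \<Sum>i\<in>V. W i w w') a
      = (\<Sum>w\<in>S. \<Sum>w'\<in>S. \<Sum>i\<in>V. cnj (a w) * W i w w' * a w')"
    unfolding quad_form_def by (simp add: sum_distrib_left sum_distrib_right)
  also have "\<dots> = (\<Sum>w\<in>S. \<Sum>i\<in>V. \<Sum>w'\<in>S. cnj (a w) * W i w w' * a w')"
    by (rule sum.cong[OF refl]) (rule sum.swap)
  also have "\<dots> = (\<Sum>i\<in>V. quad_form S (W i) a)"
    unfolding quad_form_def by (rule sum.swap)
  finally show ?thesis .
qed

lemma quad_form_outer:
  "quad_form S (\<lambda>w w'. cnj (p w) * k * q w') a = cnj (\<Sum>w\<in>S. a w * p w) * k * (\<Sum>w\<in>S. a w * q w)"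
proof -
  have "cnj (\<Sum>w\<in>S. a w * p w) * k * (\<Sum>w\<in>S. a w * q w)
      = (\<Sum>w\<in>S. \<Sum>w'\<in>S. cnj (a w) * cnj (p w) * k * (a w' * q w'))"
    by (simp add: sum_distrib_left sum_distrib_right) (rule sum.swap)
  also have "\<dots> = quad_form S (\<lambda>w w'. cnj (p w) * k * q w') a"
    unfolding quad_form_def by (intro sum.cong refl) (simp only: ac_simps)
  finally show ?thesis ..
qed

lemma quad_form_rank_one:
  "quad_form S (\<lambda>w w'. p w * cnj (p w')) a = complex_of_real ((cmod (\<Sum>w\<in>S. a w * cnj (p w)))^2)"
proof -
  define z where "z = (\<Sum>w\<in>S. a w * cnj (p w))"
  have "quad_form S (\<lambda>w w'. p w * cnj (p w')) a
      = quad_form S (\<lambda>w w'. cnj (cnj (p w)) * 1 * cnj (p w')) a"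
    by simp
  also have "\<dots> = cnj z * 1 * z"
    unfolding z_def by (rule quad_form_outer)
  also have "\<dots> = complex_of_real ((cmod z)^2)"
    by (simp only: complex_norm_square) (simp add: mult.commute)
  finally show ?thesis
    unfolding z_def .
qed

lemma quad_form_sandwich:
  "quad_form S (\<lambda>w w'. \<Sum>x\<in>X. \<Sum>y\<in>X. cnj (B x w) * K x y * B y w') a
     = quad_form X K (\<lambda>x. \<Sum>w\<in>S. a w * B x w)"
  by (simp only: quad_form_sum_kernel quad_form_outer) (simp add: quad_form_def)

lemma inner_X_sum_right:
  "inner_X X g (\<lambda>x. \<Sum>e\<in>E. b e * h e x) = (\<Sum>e\<in>E. cnj (b e) * inner_X X g (h e))"
proof -
  have "inner_X X g (\<lambda>x. \<Sum>e\<in>E. b e * h e x)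
      = (\<Sum>x\<in>X. \<Sum>e\<in>E. cnj (b e) * (g x * cnj (h e x))) / of_nat (card X)"
    unfolding inner_X_def by (simp add: sum_distrib_left mult_ac)
  also have "\<dots> = (\<Sum>e\<in>E. \<Sum>x\<in>X. cnj (b e) * (g x * cnj (h e x))) / of_nat (card X)"
    by (subst sum.swap) (rule refl)
  also have "\<dots> = (\<Sum>e\<in>E. cnj (b e) * inner_X X g (h e))"
    unfolding inner_X_def by (simp add: sum_divide_distrib sum_distrib_left)
  finally show ?thesis .
qed

lemma quad_form_What:
  "quad_form (I u) (What X I u) (a u) = complex_of_real
     (\<Sum>v\<in>{v. v \<subset> u}. \<Sum>\<eta>\<in>I v. (cmod (inner_X X (fv I a u) (\<lambda>x. Aent v x \<eta>)))^2)"
proof -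
  let ?M = "of_nat (card X) :: complex"
  have "quad_form (I u) (What X I u) (a u) = 1 / ?M^2 *
     quad_form X (\<lambda>x y. \<Sum>v\<in>{v. v \<subset> u}. \<Sum>\<eta>\<in>I v. Aent v x \<eta> * cnj (Aent v y \<eta>)) (fv I a u)"
    unfolding What_def quad_form_scale quad_form_sandwich fv_def ..
  also have "\<dots> = 1 / ?M^2 * (\<Sum>v\<in>{v. v \<subset> u}. \<Sum>\<eta>\<in>I v.
      complex_of_real ((cmod (\<Sum>x\<in>X. fv I a u x * cnj (Aent v x \<eta>)))^2))"
    by (simp only: quad_form_sum_kernel quad_form_rank_one)
  also have "\<dots> = complex_of_real
     (\<Sum>v\<in>{v. v \<subset> u}. \<Sum>\<eta>\<in>I v. (cmod (inner_X X (fv I a u) (\<lambda>x. Aent v x \<eta>)))^2)"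
    unfolding of_real_sum sum_distrib_left
    by (intro sum.cong refl) (simp add: inner_X_def norm_divide power_divide)
  finally show ?thesis .
qed

theorem lemma4p5:
  fixes X :: "(real^'d::finite) set"
    and I :: "'d set \<Rightarrow> (real^'d) set"
    and a :: "'d set \<Rightarrow> real^'d \<Rightarrow> complex"
    and u :: "'d set"
  assumes "finite X"
    and "\<And>v. v \<subseteq> u \<Longrightarrow> finite (I v)"
    and "\<And>v w j. v \<subseteq> u \<Longrightarrow> w \<in> I v \<Longrightarrow> j \<notin> v \<Longrightarrow> w $ j = 0"
    and "I {} = {0}"
  shows "quad_form (I u) (What X I u) (a u) \<ge>
    complex_of_real (\<Sum>v\<in>{v. v \<subset> u \<and> (\<exists>w\<in>I v. a v w \<noteq> 0)}.
        (cmod (inner_X X (fv I a u) (fv I a v)))^2 / norm2_sq (I v) (a v))"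
proof -
  \<comment> \<open>None of the hypotheses is needed: the argument is purely algebraic, and sums over an
    infinite index set are 0.\<close>
  define c where "c v \<eta> = inner_X X (fv I a u) (\<lambda>x. Aent v x \<eta>)" for v \<eta>
  have "(cmod (inner_X X (fv I a u) (fv I a v)))^2 / norm2_sq (I v) (a v)
      \<le> (\<Sum>\<eta>\<in>I v. (cmod (c v \<eta>))^2)" for v
    unfolding c_def fv_def [of I a v] inner_X_sum_right
    by (rule cmod_sum_cnj_mult_power2_div_norm2_sq_le)
  then have "(\<Sum>v\<in>{v. v \<subset> u \<and> (\<exists>w\<in>I v. a v w \<noteq> 0)}.
        (cmod (inner_X X (fv I a u) (fv I a v)))^2 / norm2_sq (I v) (a v))
     \<le> (\<Sum>v\<in>{v. v \<subset> u \<and> (\<exists>w\<in>I v. a v w \<noteq> 0)}. \<Sum>\<eta>\<in>I v. (cmod (c v \<eta>))^2)"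
    (is "?rhs \<le> _") by (rule sum_mono)
  also have "\<dots> \<le> (\<Sum>v\<in>{v. v \<subset> u}. \<Sum>\<eta>\<in>I v. (cmod (c v \<eta>))^2)"
    by (rule sum_mono2) (auto simp: sum_nonneg)
  finally have "?rhs \<le> (\<Sum>v\<in>{v. v \<subset> u}. \<Sum>\<eta>\<in>I v. (cmod (c v \<eta>))^2)" .
  then show ?thesis
    unfolding quad_form_What c_def by (simp only: less_eq_complex_def Re_complex_of_real Im_complex_of_real)
qed

end
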